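(* Let $K$ be a field, $X$ a finite connected poset, $\varphi$ a Lie automorphism of $I(X,K)$, and $e_{xy}\in L_i$ with $i>0$. Let $u<v$ and $k\in K^*$ be such that $\widetilde\varphi(e_{xy})=k\,e_{uv}$. Then $\varphi(e_{xy})-\widetilde\varphi(e_{xy})\in\langle e_{uv}\rangle\cap J_{i+1}$.
   Context: $I(X,K)$ is the incidence algebra: functions $f:X\times X\to K$ with $f(x,y)=0$ unless $x\le y$, product $(fg)(x,y)=\sum_{x\le t\le y}f(x,t)g(t,y)$; $e_{xy}$ ($x\le y$) is the basis element equal to $1$ at $(x,y)$ and $0$ elsewhere; $\langle e_{uv}\rangle$ is the two-sided ideal generated by $e_{uv}$. A Lie automorphism is a bijective linear map preserving $[f,g]=fg-gf$. Let $l(\lfloor x,y\rfloor)$ be the maximum length of a chain in $\{z:x\le z\le y\}$; $L_i=\mathrm{span}_K\{e_{xy}: l(\lfloor x,y\rfloor)=i\}$ and $J_i=\mathrm{span}_K\{e_{xy}: l(\lfloor x,y\rfloor)\ge i\}$ ($i\ge0$). $\widetilde\varphi$ is the linear map sending $e_{xy}\in L_i$ to the $L_i$-component of $\varphi(e_{xy})$ in $I(X,K)=\bigoplus_iL_i$; for $i>0$ it is known that $\widetilde\varphi(e_{xy})$ is a nonzero multiple of some $e_{uv}$ with $u<v$. Connected means any two elements are joined by a sequence in which consecutive elements are in a covering relation. *)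

theory Defs
  imports Main "HOL-Library.Function_Algebras"
begin

text \<open>Incidence algebra I(X,K) of a finite poset X (a finite ordered type 'x)
  over a field K: functions vanishing off the order relation.\<close>

definition incalg :: "('x::{finite,order} \<Rightarrow> 'x \<Rightarrow> 'k::field) set" where
  "incalg = {f. \<forall>a b. \<not> a \<le> b \<longrightarrow> f a b = 0}"

definition incmul :: "('x::{finite,order} \<Rightarrow> 'x \<Rightarrow> 'k::field) \<Rightarrow> ('x \<Rightarrow> 'x \<Rightarrow> 'k) \<Rightarrow> ('x \<Rightarrow> 'x \<Rightarrow> 'k)" where
  "incmul f g = (\<lambda>a b. \<Sum>t\<in>{t. a \<le> t \<and> t \<le> b}. f a t * g t b)"

definition incsmult :: "'k::field \<Rightarrow> ('x \<Rightarrow> 'x \<Rightarrow> 'k) \<Rightarrow> ('x \<Rightarrow> 'x \<Rightarrow> 'k)" where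
  "incsmult c f = (\<lambda>a b. c * f a b)"

definition lie_bracket :: "('x::{finite,order} \<Rightarrow> 'x \<Rightarrow> 'k::field) \<Rightarrow> ('x \<Rightarrow> 'x \<Rightarrow> 'k) \<Rightarrow> ('x \<Rightarrow> 'x \<Rightarrow> 'k)" where
  "lie_bracket f g = incmul f g - incmul g f"

definition ebas :: "'x \<Rightarrow> 'x \<Rightarrow> ('x \<Rightarrow> 'x \<Rightarrow> 'k::field)" where
  "ebas x y = (\<lambda>a b. if a = x \<and> b = y then 1 else 0)"

definition lie_automorphism :: "(('x::{finite,order} \<Rightarrow> 'x \<Rightarrow> 'k::field) \<Rightarrow> ('x \<Rightarrow> 'x \<Rightarrow> 'k)) \<Rightarrow> bool" where
  "lie_automorphism \<phi> \<longleftrightarrow>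
     bij_betw \<phi> incalg incalg \<and>
     (\<forall>f\<in>incalg. \<forall>g\<in>incalg. \<phi> (f + g) = \<phi> f + \<phi> g) \<and>
     (\<forall>c. \<forall>f\<in>incalg. \<phi> (incsmult c f) = incsmult c (\<phi> f)) \<and>
     (\<forall>f\<in>incalg. \<forall>g\<in>incalg. \<phi> (lie_bracket f g) = lie_bracket (\<phi> f) (\<phi> g))"

definition covers :: "'x::order \<Rightarrow> 'x \<Rightarrow> bool" where
  "covers a b \<longleftrightarrow> a < b \<and> \<not> (\<exists>z. a < z \<and> z < b)"

definition connected_poset :: "'x::order itself \<Rightarrow> bool" where
  "connected_poset _ \<longleftrightarrow> (\<forall>a b::'x. (\<lambda>p q. covers p q \<or> covers q p)\<^sup>*\<^sup>* a b)"

definition ilen :: "'x::{finite,order} \<Rightarrow> 'x \<Rightarrow> nat" where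
  "ilen x y = Max {card C - 1 | C. C \<subseteq> {x..y} \<and> C \<noteq> {} \<and> (\<forall>a\<in>C. \<forall>b\<in>C. a \<le> b \<or> b \<le> a)}"

definition Lcomp :: "nat \<Rightarrow> ('x::{finite,order} \<Rightarrow> 'x \<Rightarrow> 'k::field) \<Rightarrow> ('x \<Rightarrow> 'x \<Rightarrow> 'k)" where
  "Lcomp i f = (\<lambda>a b. if a \<le> b \<and> ilen a b = i then f a b else 0)"

text \<open>J_i = span of e_ab with l([a,b]) \<ge> i.\<close>
definition Jsp :: "nat \<Rightarrow> ('x::{finite,order} \<Rightarrow> 'x \<Rightarrow> 'k::field) set" where
  "Jsp i = {f \<in> incalg. \<forall>a b. f a b \<noteq> 0 \<longrightarrow> ilen a b \<ge> i}"

definition is_ideal :: "('x::{finite,order} \<Rightarrow> 'x \<Rightarrow> 'k::field) set \<Rightarrow> bool" where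
  "is_ideal S \<longleftrightarrow> S \<subseteq> incalg \<and> 0 \<in> S \<and>
     (\<forall>f\<in>S. \<forall>g\<in>S. f + g \<in> S) \<and>
     (\<forall>c. \<forall>f\<in>S. incsmult c f \<in> S) \<and>
     (\<forall>r\<in>incalg. \<forall>s\<in>S. incmul r s \<in> S \<and> incmul s r \<in> S)"

definition ideal_gen :: "('x::{finite,order} \<Rightarrow> 'x \<Rightarrow> 'k::field) \<Rightarrow> ('x \<Rightarrow> 'x \<Rightarrow> 'k) set" where
  "ideal_gen g = \<Inter>{S. is_ideal S \<and> g \<in> S}"

end

theory Submission
  imports Defs
begin

(*
  Let A be the image under \<phi> of the ideal <e_xy>, i.e. of the functions supported in
  {(a, b). a \<le> x, y \<le> b}. As the image of a Lie ideal, A is a Lie ideal, so it contains e_cd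
  (c \<noteq> d) as soon as one of its elements is nonzero at (c, d). Since every e_ab with
  l[a, b] > i is a bracket [e_at, e_tb] with l[t, b] \<ge> i, \<phi> preserves each J_i, so A \<subseteq> J_i.

  Call (c, d) minimal for A if all elements of A vanish at (c, t) for t < d and at (t, d) for
  c < t. There every bracket [j, \<alpha>] with j \<in> J_1 and \<alpha> \<in> A vanishes. Every e_ab \<in> <e_xy> other
  than e_xy is such a bracket, [e_ax, e_xb] or [e_xy, e_yb] up to sign, hence
  \<phi>(f)(c, d) = f(x, y) \<phi>(e_xy)(c, d) at minimal entries. The entry (u, v) is minimal because
  l[u, v] = i and A \<subseteq> J_i. If \<phi>(e_xy) were nonzero somewhere outside the cone
  {(c, d). c \<le> u, v \<le> d}, an entry of least length outside the cone in the supports of A would be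
  a minimal (c, d) \<noteq> (u, v) with e_cd = \<phi>(f), f \<in> <e_xy>, and evaluating at (c, d) and (u, v)
  gives f(x, y) \<noteq> 0 and f(x, y) k = 0. So \<phi>(e_xy) \<in> <e_uv> \<inter> J_i, and removing its
  L_i-component leaves an element of J_(i+1).
*)

section \<open>Length of intervals\<close>

lemma chain_card_le_ilen:
  fixes a c :: "'x::{finite,order}"
  assumes "C \<subseteq> {a..c}" "C \<noteq> {}" "\<forall>p\<in>C. \<forall>q\<in>C. p \<le> q \<or> q \<le> p"
  shows "card C - 1 \<le> ilen a c"
  unfolding ilen_def using assms by (intro Max_ge finite_image_set) auto

lemma ilen_attained:
  fixes a c :: "'x::{finite,order}"
  assumes "a \<le> c"
  obtains C where "C \<subseteq> {a..c}" "C \<noteq> {}" "\<forall>p\<in>C. \<forall>q\<in>C. p \<le> q \<or> q \<le> p"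
    and "ilen a c = card C - 1"
proof -
  have "ilen a c \<in> {card C - 1 | C. C \<subseteq> {a..c} \<and> C \<noteq> {} \<and> (\<forall>p\<in>C. \<forall>q\<in>C. p \<le> q \<or> q \<le> p)}"
    unfolding ilen_def using assms by (intro Max_in finite_image_set) (auto intro!: exI[of _ "{a}"])
  with that show ?thesis by blast
qed

lemma ilen_self [simp]: "ilen (a::'x::{finite,order}) a = 0"
proof -
  obtain C where "C \<subseteq> {a}" "ilen a a = card C - 1"
    using ilen_attained[of a a] by (metis atLeastAtMost_singleton order_refl)
  moreover have "card C \<le> card {a}" using card_mono[OF _ \<open>C \<subseteq> {a}\<close>] by blast
  ultimately show ?thesis by simp
qed

lemma ilen_pos: "(a::'x::{finite,order}) < b \<Longrightarrow> 0 < ilen a b"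
  using chain_card_le_ilen[of "{a, b}" a b] by force

lemma ilen_mono:
  fixes a b c d :: "'x::{finite,order}"
  assumes "a \<le> b" "b \<le> c" "c \<le> d"
  shows "ilen b c \<le> ilen a d"
proof -
  obtain C where "C \<subseteq> {b..c}" "C \<noteq> {}" "\<forall>p\<in>C. \<forall>q\<in>C. p \<le> q \<or> q \<le> p" "ilen b c = card C - 1"
    using ilen_attained[OF assms(2)] .
  moreover have "{b..c} \<subseteq> {a..d}" using assms by auto
  ultimately show ?thesis using chain_card_le_ilen[of C a d] by (metis subset_trans)
qed

lemma ilen_less_if_comparable_outside:
  fixes a b c d e :: "'x::{finite,order}"
  assumes "b \<le> c" "{b..c} \<subseteq> {a..d}" "e \<in> {a..d} - {b..c}" "\<forall>z\<in>{b..c}. z \<le> e \<or> e \<le> z"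
  shows "ilen b c < ilen a d"
proof -
  obtain C where C: "C \<subseteq> {b..c}" "C \<noteq> {}" "\<forall>p\<in>C. \<forall>q\<in>C. p \<le> q \<or> q \<le> p"
    and len: "ilen b c = card C - 1"
    using ilen_attained[OF assms(1)] .
  have "card (insert e C) - 1 \<le> ilen a d"
    by (rule chain_card_le_ilen) (use C assms in blast)+
  moreover have "e \<notin> C" "card C > 0" using C assms(3) by (auto simp: card_gt_0_iff)
  ultimately show ?thesis using len by simp
qed

lemma ilen_strict_mono_left:
  "(a::'x::{finite,order}) < b \<Longrightarrow> b \<le> c \<Longrightarrow> ilen b c < ilen a c"
  by (rule ilen_less_if_comparable_outside[where e = a]) auto

lemma ilen_strict_mono_right:
  "(a::'x::{finite,order}) \<le> b \<Longrightarrow> b < c \<Longrightarrow> ilen a b < ilen a c"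
  by (rule ilen_less_if_comparable_outside[where e = c]) auto

lemma finite_chain_has_least:
  fixes C :: "'x::order set"
  assumes "finite C" "C \<noteq> {}" "\<forall>p\<in>C. \<forall>q\<in>C. p \<le> q \<or> q \<le> p"
  obtains m where "m \<in> C" "\<forall>z\<in>C. m \<le> z"
proof -
  obtain m where m: "m \<in> C" "\<forall>z\<in>C. z \<le> m \<longrightarrow> m = z"
    using finite_has_minimal[OF assms(1,2)] by auto
  have "m \<le> z" if "z \<in> C" for z
    using assms(3) m that by fastforce
  with m(1) show ?thesis using that by blast
qed

lemma ilen_Suc_split:
  fixes a c :: "'x::{finite,order}"
  assumes "a \<le> c" "Suc i \<le> ilen a c"
  obtains t where "a < t" "t \<le> c" "i \<le> ilen t c"
proof -
  obtain C where C: "C \<subseteq> {a..c}" "C \<noteq> {}" "\<forall>p\<in>C. \<forall>q\<in>C. p \<le> q \<or> q \<le> p"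
    and len: "ilen a c = card C - 1"
    using ilen_attained[OF assms(1)] .
  obtain m where m: "m \<in> C" "\<forall>z\<in>C. m \<le> z"
    using finite_chain_has_least[OF finite C(2,3)] .
  have card_rest: "card (C - {m}) = card C - 1"
    using m(1) by simp
  with assms(2) len have rest: "C - {m} \<noteq> {}"
    by (intro notI) simp
  obtain t where t: "t \<in> C - {m}" "\<forall>z\<in>C - {m}. t \<le> z"
    using finite_chain_has_least[OF finite rest] C(3) by blast
  show ?thesis
  proof
    have "m < t" using m(2) t(1) by (auto simp: order.strict_iff_order)
    moreover have "a \<le> m" using C(1) m(1) by auto
    ultimately show "a < t" by simp
    show "t \<le> c" using C(1) t(1) by auto
    have "card (C - {m}) - 1 \<le> ilen t c"
      by (rule chain_card_le_ilen) (use C t rest in auto)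
    then show "i \<le> ilen t c" using assms(2) len card_rest by linarith
  qed
qed

section \<open>Computations in the incidence algebra\<close>

lemma sum_apply2:
  fixes F :: "'p \<Rightarrow> 'a \<Rightarrow> 'b \<Rightarrow> 'c::comm_monoid_add"
  shows "(\<Sum>p\<in>P. F p) a b = (\<Sum>p\<in>P. F p a b)"
  by (induction P rule: infinite_finite_induct) auto

definition incsupp :: "('x \<Rightarrow> 'x \<Rightarrow> 'k::zero) \<Rightarrow> ('x \<times> 'x) set" where
  "incsupp f = {(a, b). f a b \<noteq> 0}"

lemma incsupp_le: "f \<in> incalg \<Longrightarrow> (a, b) \<in> incsupp f \<Longrightarrow> a \<le> b"
  by (auto simp: incalg_def incsupp_def)

lemma incsupp_expansion:
  fixes f :: "'x::{finite,order} \<Rightarrow> 'x \<Rightarrow> 'k::field"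
  shows "f = (\<Sum>(a, b)\<in>incsupp f. incsmult (f a b) (ebas a b))"
proof (intro ext)
  fix c d
  have "f c d = (\<Sum>p\<in>incsupp f. if p = (c, d) then f c d else 0)"
    by (simp add: incsupp_def)
  also have "\<dots> = (\<Sum>(a, b)\<in>incsupp f. incsmult (f a b) (ebas a b)) c d"
    unfolding sum_apply2 by (intro sum.cong) (auto simp: incsmult_def ebas_def split: if_split_asm)
  finally show "f c d = (\<Sum>(a, b)\<in>incsupp f. incsmult (f a b) (ebas a b)) c d" .
qed

definition incsubspace :: "('x::{finite,order} \<Rightarrow> 'x \<Rightarrow> 'k::field) set \<Rightarrow> bool" where
  "incsubspace S \<longleftrightarrow> 0 \<in> S \<and> (\<forall>f\<in>S. \<forall>g\<in>S. f + g \<in> S) \<and> (\<forall>c. \<forall>f\<in>S. incsmult c f \<in> S)"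

lemma incsubspace_smult: "incsubspace S \<Longrightarrow> f \<in> S \<Longrightarrow> incsmult c f \<in> S"
  by (simp add: incsubspace_def)

lemma incsubspace_sum: "incsubspace S \<Longrightarrow> (\<And>p. p \<in> P \<Longrightarrow> F p \<in> S) \<Longrightarrow> sum F P \<in> S"
  by (induction P rule: infinite_finite_induct) (auto simp: incsubspace_def)

lemma incsubspace_incalg: "incsubspace incalg"
  by (auto simp: incsubspace_def incalg_def incsmult_def)

lemma incsubspace_support_restricted:
  "incsubspace {f :: 'x::{finite,order} \<Rightarrow> 'x \<Rightarrow> 'k::field. f \<in> incalg \<and> (\<forall>a b. f a b \<noteq> 0 \<longrightarrow> P a b)}"
  unfolding incsubspace_def
proof (intro conjI ballI allI)
  show "0 \<in> {f. f \<in> incalg \<and> (\<forall>a b. f a b \<noteq> 0 \<longrightarrow> P a b)}"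
    by (simp add: incalg_def)
  fix f g :: "'x \<Rightarrow> 'x \<Rightarrow> 'k"
  assume f: "f \<in> {f. f \<in> incalg \<and> (\<forall>a b. f a b \<noteq> 0 \<longrightarrow> P a b)}"
  then show "incsmult c f \<in> {f. f \<in> incalg \<and> (\<forall>a b. f a b \<noteq> 0 \<longrightarrow> P a b)}" for c
    by (simp add: incalg_def incsmult_def)
  assume g: "g \<in> {f. f \<in> incalg \<and> (\<forall>a b. f a b \<noteq> 0 \<longrightarrow> P a b)}"
  have "P a b" if "(f + g) a b \<noteq> 0" for a b
    using f g that by (cases "f a b = 0") auto
  with f g show "f + g \<in> {f. f \<in> incalg \<and> (\<forall>a b. f a b \<noteq> 0 \<longrightarrow> P a b)}"
    by (simp add: incalg_def)
qed

lemma incsubspace_Jsp: "incsubspace (Jsp i)"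
  unfolding Jsp_def by (rule incsubspace_support_restricted)

lemma incsubspace_ideal: "is_ideal S \<Longrightarrow> incsubspace S"
  by (simp add: is_ideal_def incsubspace_def)

lemma incalg_diff: "f \<in> incalg \<Longrightarrow> g \<in> incalg \<Longrightarrow> f - g \<in> incalg"
  by (auto simp: incalg_def)

lemma incalg_incmul: "incmul f g \<in> incalg"
proof -
  have "incmul f g a b = 0" if "\<not> a \<le> b" for a b
  proof -
    have "{t. a \<le> t \<and> t \<le> b} = {}" using that order_trans by blast
    then show ?thesis by (simp only: incmul_def sum.empty)
  qed
  then show ?thesis by (simp add: incalg_def)
qed

lemma incalg_lie_bracket: "lie_bracket f g \<in> incalg"
  unfolding lie_bracket_def by (intro incalg_diff incalg_incmul)

lemma ebas_in_incalg: "(a::'x::{finite,order}) \<le> b \<Longrightarrow> (ebas a b :: 'x \<Rightarrow> 'x \<Rightarrow> 'k::field) \<in> incalg"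
  by (auto simp: incalg_def ebas_def)

lemma incmul_ebas_left:
  fixes f :: "'x::{finite,order} \<Rightarrow> 'x \<Rightarrow> 'k::field"
  assumes "a \<le> b" "f \<in> incalg"
  shows "incmul (ebas a b) f = (\<lambda>c d. if c = a then f b d else 0)"
proof (intro ext)
  fix c d
  have "incmul (ebas a b) f c d = (\<Sum>t\<in>{t. c \<le> t \<and> t \<le> d}. if c = a \<and> t = b then f b d else 0)"
    unfolding incmul_def ebas_def by (intro sum.cong) auto
  also have "\<dots> = (if c = a then f b d else 0)"
    using assms by (auto simp: incalg_def)
  finally show "incmul (ebas a b) f c d = (if c = a then f b d else 0)" .
qed

lemma incmul_ebas_right:
  fixes f :: "'x::{finite,order} \<Rightarrow> 'x \<Rightarrow> 'k::field"
  assumes "a \<le> b" "f \<in> incalg"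
  shows "incmul f (ebas a b) = (\<lambda>c d. if d = b then f c a else 0)"
proof (intro ext)
  fix c d
  have "incmul f (ebas a b) c d = (\<Sum>t\<in>{t. c \<le> t \<and> t \<le> d}. if d = b \<and> t = a then f c a else 0)"
    unfolding incmul_def ebas_def by (intro sum.cong) auto
  also have "\<dots> = (if d = b then f c a else 0)"
    using assms by (auto simp: incalg_def)
  finally show "incmul f (ebas a b) c d = (if d = b then f c a else 0)" .
qed

lemma incmul_ebas_ebas:
  fixes a b c :: "'x::{finite,order}"
  assumes "a \<le> b" "b \<le> c"
  shows "incmul (ebas a b) (ebas b c) = (ebas a c :: 'x \<Rightarrow> 'x \<Rightarrow> 'k::field)"
  using assms by (simp add: incmul_ebas_left ebas_in_incalg) (auto simp: ebas_def fun_eq_iff)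

lemma lie_bracket_ebas_ebas:
  fixes a b c :: "'x::{finite,order}"
  assumes "a \<le> b" "b \<le> c" "a \<noteq> c"
  shows "lie_bracket (ebas a b) (ebas b c) = (ebas a c :: 'x \<Rightarrow> 'x \<Rightarrow> 'k::field)"
  using assms unfolding lie_bracket_def
  by (simp add: incmul_ebas_ebas incmul_ebas_left ebas_in_incalg) (auto simp: ebas_def fun_eq_iff)

lemma lie_bracket_ebas_diagonal:
  fixes f :: "'x::{finite,order} \<Rightarrow> 'x \<Rightarrow> 'k::field"
  assumes "f \<in> incalg"
  shows "lie_bracket (ebas c c) f = (\<lambda>p q. (if p = c then f c q else 0) - (if q = c then f p c else 0))"
  unfolding lie_bracket_def using assms by (simp add: incmul_ebas_left incmul_ebas_right fun_eq_iff)

lemma lie_bracket_swap: "lie_bracket g f = - lie_bracket f g"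
  by (simp add: lie_bracket_def)

lemma lie_bracket_apply:
  "lie_bracket f g a b = (\<Sum>t\<in>{t. a \<le> t \<and> t \<le> b}. f a t * g t b - g a t * f t b)"
  unfolding lie_bracket_def incmul_def by (simp add: sum_subtractf)

lemma lie_bracket_nonzero_entry:
  assumes "lie_bracket f g a b \<noteq> 0"
  obtains t where "a \<le> t" "t \<le> b" "f a t \<noteq> 0" "g t b \<noteq> 0"
    | t where "a \<le> t" "t \<le> b" "g a t \<noteq> 0" "f t b \<noteq> 0"
proof -
  have "\<exists>t. a \<le> t \<and> t \<le> b \<and> f a t * g t b - g a t * f t b \<noteq> 0"
  proof (rule ccontr)
    assume "\<not> ?thesis"
    then have "lie_bracket f g a b = 0"
      unfolding lie_bracket_apply by (intro sum.neutral) auto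
    with assms show False by simp
  qed
  then obtain t where t: "a \<le> t" "t \<le> b" and nz: "f a t * g t b - g a t * f t b \<noteq> 0"
    by auto
  from nz have "f a t * g t b \<noteq> 0 \<or> g a t * f t b \<noteq> 0"
    by auto
  then show ?thesis
  proof
    assume "f a t * g t b \<noteq> 0"
    then show ?thesis using that(1)[OF t] by simp
  next
    assume "g a t * f t b \<noteq> 0"
    then show ?thesis using that(2)[OF t] by simp
  qed
qed

lemma ebas_in_Jsp:
  "(a::'x::{finite,order}) \<le> b \<Longrightarrow> i \<le> ilen a b \<Longrightarrow> (ebas a b :: 'x \<Rightarrow> 'x \<Rightarrow> 'k::field) \<in> Jsp i"
  by (simp add: Jsp_def ebas_in_incalg) (simp add: ebas_def)

lemma Jsp_diagonal:
  assumes "0 < i" "f \<in> Jsp i"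
  shows "f a a = 0"
proof (rule ccontr)
  assume "f a a \<noteq> 0"
  with assms(2) have "i \<le> ilen a a" unfolding Jsp_def by blast
  with assms(1) show False by simp
qed

lemma lie_bracket_diagonal:
  fixes f g :: "'x::{finite,order} \<Rightarrow> 'x \<Rightarrow> 'k::field"
  shows "lie_bracket f g a a = 0"
proof -
  have "{t. a \<le> t \<and> t \<le> a} = {a}"
    by (auto intro: order.antisym)
  then show ?thesis
    by (simp add: lie_bracket_apply)
qed

lemma lie_bracket_in_Jsp_1:
  fixes f g :: "'x::{finite,order} \<Rightarrow> 'x \<Rightarrow> 'k::field"
  shows "lie_bracket f g \<in> Jsp 1"
proof -
  have "1 \<le> ilen a b" if "lie_bracket f g a b \<noteq> 0" for a b
  proof -
    have "a \<noteq> b" using that lie_bracket_diagonal[of f g a] by auto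
    moreover have "a \<le> b" using that incalg_lie_bracket[of f g] by (auto simp: incalg_def)
    ultimately have "a < b" by (rule order.not_eq_order_implies_strict)
    then show ?thesis using ilen_pos[of a b] by simp
  qed
  then show ?thesis by (auto simp: Jsp_def incalg_lie_bracket)
qed

lemma lie_bracket_in_Jsp_Suc:
  fixes f g :: "'x::{finite,order} \<Rightarrow> 'x \<Rightarrow> 'k::field"
  assumes f: "f \<in> Jsp 1" and g: "g \<in> Jsp i"
  shows "lie_bracket f g \<in> Jsp (Suc i)"
proof -
  have "Suc i \<le> ilen a b" if "lie_bracket f g a b \<noteq> 0" for a b
    using that
  proof (cases rule: lie_bracket_nonzero_entry)
    case (1 t)
    then have "a < t" using Jsp_diagonal[OF _ f, of a] by (auto simp: order.strict_iff_order)
    have "i \<le> ilen t b" using g \<open>g t b \<noteq> 0\<close> by (simp add: Jsp_def)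
    with ilen_strict_mono_left[OF \<open>a < t\<close> \<open>t \<le> b\<close>] show ?thesis by linarith
  next
    case (2 t)
    then have "t < b" using Jsp_diagonal[OF _ f, of b] by (auto simp: order.strict_iff_order)
    have "i \<le> ilen a t" using g \<open>g a t \<noteq> 0\<close> by (simp add: Jsp_def)
    with ilen_strict_mono_right[OF \<open>a \<le> t\<close> \<open>t < b\<close>] show ?thesis by linarith
  qed
  then show ?thesis by (simp add: Jsp_def incalg_lie_bracket)
qed

lemma diff_Lcomp_in_Jsp_Suc:
  fixes f :: "'x::{finite,order} \<Rightarrow> 'x \<Rightarrow> 'k::field"
  assumes "f \<in> Jsp i"
  shows "f - Lcomp i f \<in> Jsp (Suc i)"
proof -
  have "Suc i \<le> ilen a b" if "(f - Lcomp i f) a b \<noteq> 0" for a b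
  proof -
    have "f a b \<noteq> 0" "\<not> (a \<le> b \<and> ilen a b = i)"
      using that by (auto simp: Lcomp_def split: if_splits)
    moreover from assms \<open>f a b \<noteq> 0\<close> have "a \<le> b" "i \<le> ilen a b"
      by (auto simp: Jsp_def incalg_def)
    ultimately show ?thesis by auto
  qed
  moreover have "f - Lcomp i f \<in> incalg"
    using assms by (auto simp: Jsp_def incalg_def Lcomp_def)
  ultimately show ?thesis by (simp add: Jsp_def)
qed

section \<open>Ideals and Lie ideals\<close>

(* The two-sided ideal <e_xy>, described by supports. *)
definition ebas_ideal :: "'x::{finite,order} \<Rightarrow> 'x \<Rightarrow> ('x \<Rightarrow> 'x \<Rightarrow> 'k::field) set" where
  "ebas_ideal x y = {f \<in> incalg. \<forall>a b. f a b \<noteq> 0 \<longrightarrow> a \<le> x \<and> y \<le> b}"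

lemma ebas_in_ebas_ideal: "a \<le> x \<Longrightarrow> y \<le> b \<Longrightarrow> a \<le> b \<Longrightarrow> ebas a b \<in> ebas_ideal x y"
  by (simp add: ebas_ideal_def ebas_in_incalg) (simp add: ebas_def)

lemma ebas_ideal_subset_Jsp: "x \<le> y \<Longrightarrow> ebas_ideal x y \<subseteq> Jsp (ilen x y)"
  using ilen_mono[of _ x y] by (auto simp: ebas_ideal_def Jsp_def)

lemma diff_Lcomp_in_ebas_ideal: "f \<in> ebas_ideal x y \<Longrightarrow> f - Lcomp i f \<in> ebas_ideal x y"
  by (auto simp: ebas_ideal_def incalg_def Lcomp_def)

lemma ebas_ideal_subset_ideal_gen:
  fixes x y :: "'x::{finite,order}"
  assumes "x \<le> y"
  shows "ebas_ideal x y \<subseteq> ideal_gen (ebas x y :: 'x \<Rightarrow> 'x \<Rightarrow> 'k::field)"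
proof
  fix f :: "'x \<Rightarrow> 'x \<Rightarrow> 'k"
  assume f: "f \<in> ebas_ideal x y"
  show "f \<in> ideal_gen (ebas x y)"
    unfolding ideal_gen_def
  proof (intro InterI, elim CollectE conjE)
    fix S :: "('x \<Rightarrow> 'x \<Rightarrow> 'k) set"
    assume S: "is_ideal S" "ebas x y \<in> S"
    have "ebas a b \<in> S" if "(a, b) \<in> incsupp f" for a b
    proof -
      from f that have "a \<le> x" "y \<le> b" by (auto simp: ebas_ideal_def incsupp_def)
      then have "ebas a b = incmul (incmul (ebas a x) (ebas x y)) (ebas y b)"
        using assms by (simp add: incmul_ebas_ebas order_trans[OF _ assms])
      also have "\<dots> \<in> S"
        using S \<open>a \<le> x\<close> \<open>y \<le> b\<close> assms
        by (simp add: is_ideal_def ebas_in_incalg order_trans[OF assms])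
      finally show ?thesis .
    qed
    then have "(\<Sum>(a, b)\<in>incsupp f. incsmult (f a b) (ebas a b)) \<in> S"
      using incsubspace_ideal[OF S(1)] by (auto intro!: incsubspace_sum incsubspace_smult)
    then show "f \<in> S"
      using incsupp_expansion[of f] by simp
  qed
qed

definition lie_ideal :: "('x::{finite,order} \<Rightarrow> 'x \<Rightarrow> 'k::field) set \<Rightarrow> bool" where
  "lie_ideal S \<longleftrightarrow> S \<subseteq> incalg \<and> incsubspace S \<and> (\<forall>r\<in>incalg. \<forall>f\<in>S. lie_bracket r f \<in> S)"

lemma lie_ideal_ebas_ideal: "lie_ideal (ebas_ideal x y)"
  unfolding lie_ideal_def
proof (intro conjI ballI)
  show "ebas_ideal x y \<subseteq> incalg" by (auto simp: ebas_ideal_def)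
  show "incsubspace (ebas_ideal x y)"
    unfolding ebas_ideal_def by (rule incsubspace_support_restricted)
  fix r f
  assume f: "f \<in> ebas_ideal x y"
  have "a \<le> x \<and> y \<le> b" if "lie_bracket r f a b \<noteq> 0" for a b
    using that
  proof (cases rule: lie_bracket_nonzero_entry)
    case (1 t)
    then show ?thesis using f by (auto simp: ebas_ideal_def intro: order_trans)
  next
    case (2 t)
    then show ?thesis using f by (auto simp: ebas_ideal_def intro: order_trans)
  qed
  then show "lie_bracket r f \<in> ebas_ideal x y"
    by (simp add: ebas_ideal_def incalg_lie_bracket)
qed

lemma lie_ideal_contains_ebas:
  assumes S: "lie_ideal S" and f: "f \<in> S" and nz: "f c d \<noteq> 0" and "c \<noteq> d"
  shows "ebas c d \<in> S"
proof -
  have "f \<in> incalg" using S f by (auto simp: lie_ideal_def)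
  then have "c \<le> d"
    using nz by (auto simp: incalg_def)
  with \<open>c \<noteq> d\<close> have "\<not> d \<le> c" by auto
  with \<open>f \<in> incalg\<close> have "f d c = 0" by (simp add: incalg_def)
  have "lie_bracket (ebas d d) (lie_bracket (ebas c c) f) = incsmult (- f c d) (ebas c d)"
    unfolding lie_bracket_ebas_diagonal[OF incalg_lie_bracket]
    unfolding lie_bracket_ebas_diagonal[OF \<open>f \<in> incalg\<close>]
    using \<open>c \<noteq> d\<close> \<open>f d c = 0\<close> by (auto simp: fun_eq_iff incsmult_def ebas_def)
  moreover have "lie_bracket (ebas d d) (lie_bracket (ebas c c) f) \<in> S"
    using S f unfolding lie_ideal_def by (simp add: ebas_in_incalg incalg_lie_bracket)
  ultimately have "incsmult (- 1 / f c d) (incsmult (- f c d) (ebas c d)) \<in> S"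
    using S by (simp add: lie_ideal_def incsubspace_smult)
  then show ?thesis
    using nz by (simp add: incsmult_def)
qed

section \<open>Minimal entries\<close>

definition minimal_entry :: "('x::order \<Rightarrow> 'x \<Rightarrow> 'k::zero) set \<Rightarrow> 'x \<Rightarrow> 'x \<Rightarrow> bool" where
  "minimal_entry S c d \<longleftrightarrow> (\<forall>f\<in>S. \<forall>t. (c < t \<longrightarrow> f t d = 0) \<and> (t < d \<longrightarrow> f c t = 0))"

lemma lie_bracket_vanishes_at_minimal_entry:
  fixes j f :: "'x::{finite,order} \<Rightarrow> 'x \<Rightarrow> 'k::field"
  assumes j: "j \<in> Jsp 1" and f: "f \<in> S" and S: "minimal_entry S c d"
  shows "lie_bracket j f c d = 0"
proof -
  have left: "j c t * f t d = 0" if "c \<le> t" for t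
  proof (cases "t = c")
    case True
    then show ?thesis using Jsp_diagonal[OF _ j] by simp
  next
    case False
    with \<open>c \<le> t\<close> have "c < t" by (simp add: le_neq_trans)
    then show ?thesis using f S by (simp add: minimal_entry_def)
  qed
  have right: "f c t * j t d = 0" if "t \<le> d" for t
  proof (cases "t = d")
    case True
    then show ?thesis using Jsp_diagonal[OF _ j] by simp
  next
    case False
    with \<open>t \<le> d\<close> have "t < d" by (simp add: le_neq_trans)
    then show ?thesis using f S by (simp add: minimal_entry_def)
  qed
  show ?thesis
    unfolding lie_bracket_apply by (intro sum.neutral ballI) (simp add: left right)
qed

lemma minimal_entry_if_subset_Jsp:
  fixes S :: "('x::{finite,order} \<Rightarrow> 'x \<Rightarrow> 'k::field) set"
  assumes "S \<subseteq> Jsp (ilen c d)"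
  shows "minimal_entry S c d"
  unfolding minimal_entry_def
proof (intro ballI allI conjI impI)
  fix f t
  assume "f \<in> S"
  then have f: "f \<in> incalg" "\<And>a b. f a b \<noteq> 0 \<Longrightarrow> ilen c d \<le> ilen a b"
    using assms by (auto simp: Jsp_def)
  show "f t d = 0" if "c < t"
  proof (rule ccontr)
    assume "f t d \<noteq> 0"
    with f have "t \<le> d" "ilen c d \<le> ilen t d" by (auto simp: incalg_def)
    with ilen_strict_mono_left[OF \<open>c < t\<close>] show False by fastforce
  qed
  show "f c t = 0" if "t < d"
  proof (rule ccontr)
    assume "f c t \<noteq> 0"
    with f have "c \<le> t" "ilen c d \<le> ilen c t" by (auto simp: incalg_def)
    with ilen_strict_mono_right[OF _ \<open>t < d\<close>] show False by fastforce
  qed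
qed

lemma minimal_entry_outside_cone:
  fixes S :: "('x::{finite,order} \<Rightarrow> 'x \<Rightarrow> 'k::field) set"
  assumes "S \<subseteq> incalg" "f \<in> S" "f a b \<noteq> 0" "\<not> (a \<le> u \<and> v \<le> b)"
  shows "\<exists>g\<in>S. \<exists>c d. g c d \<noteq> 0 \<and> \<not> (c \<le> u \<and> v \<le> d) \<and> minimal_entry S c d"
  using assms(2-4)
proof (induction "ilen a b" arbitrary: f a b rule: less_induct)
  case less
  show ?case
  proof (cases "minimal_entry S a b")
    case True
    with less.prems show ?thesis by blast
  next
    case False
    then obtain g t where g: "g \<in> S" and gt: "a < t \<and> g t b \<noteq> 0 \<or> t < b \<and> g a t \<noteq> 0"
      unfolding minimal_entry_def by blast
    have "g \<in> incalg" using g assms(1) by auto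
    from gt show ?thesis
    proof (elim disjE conjE)
      assume "a < t" "g t b \<noteq> 0"
      with \<open>g \<in> incalg\<close> have "t \<le> b" by (auto simp: incalg_def)
      have "\<not> (t \<le> u \<and> v \<le> b)"
        using less.prems(3) \<open>a < t\<close> by (auto dest: order.strict_trans1 intro: less_imp_le)
      with ilen_strict_mono_left[OF \<open>a < t\<close> \<open>t \<le> b\<close>] g \<open>g t b \<noteq> 0\<close>
      show ?thesis by (rule less.hyps)
    next
      assume "t < b" "g a t \<noteq> 0"
      with \<open>g \<in> incalg\<close> have "a \<le> t" by (auto simp: incalg_def)
      have "\<not> (a \<le> u \<and> v \<le> t)"
        using less.prems(3) \<open>t < b\<close> by (auto dest: order.strict_trans2 intro: less_imp_le)
      with ilen_strict_mono_right[OF \<open>a \<le> t\<close> \<open>t < b\<close>] g \<open>g a t \<noteq> 0\<close>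
      show ?thesis by (rule less.hyps)
    qed
  qed
qed

section \<open>Lie automorphisms\<close>

context
  fixes \<phi> :: "('x::{finite,order} \<Rightarrow> 'x \<Rightarrow> 'k::field) \<Rightarrow> ('x \<Rightarrow> 'x \<Rightarrow> 'k)"
  assumes \<phi>: "lie_automorphism \<phi>"
begin

lemma lie_automorphism_incalg: "f \<in> incalg \<Longrightarrow> \<phi> f \<in> incalg"
  using \<phi> unfolding lie_automorphism_def bij_betw_def by auto

lemma lie_automorphism_surj: "incalg = \<phi> ` incalg"
  using \<phi> unfolding lie_automorphism_def bij_betw_def by auto

lemma lie_automorphism_add: "f \<in> incalg \<Longrightarrow> g \<in> incalg \<Longrightarrow> \<phi> (f + g) = \<phi> f + \<phi> g"
  using \<phi> unfolding lie_automorphism_def by auto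

lemma lie_automorphism_smult: "f \<in> incalg \<Longrightarrow> \<phi> (incsmult c f) = incsmult c (\<phi> f)"
  using \<phi> unfolding lie_automorphism_def by auto

lemma lie_automorphism_lie_bracket:
  "f \<in> incalg \<Longrightarrow> g \<in> incalg \<Longrightarrow> \<phi> (lie_bracket f g) = lie_bracket (\<phi> f) (\<phi> g)"
  using \<phi> unfolding lie_automorphism_def by auto

lemma lie_automorphism_zero: "\<phi> 0 = 0"
proof -
  have "(0 :: 'x \<Rightarrow> 'x \<Rightarrow> 'k) \<in> incalg" by (simp add: incalg_def)
  then show ?thesis using lie_automorphism_add[of 0 0] by simp
qed

lemma lie_automorphism_sum:
  "(\<And>p. p \<in> P \<Longrightarrow> F p \<in> incalg) \<Longrightarrow> \<phi> (sum F P) = (\<Sum>p\<in>P. \<phi> (F p))"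
proof (induction P rule: infinite_finite_induct)
  case (insert p P)
  have "sum F P \<in> incalg"
    using insert.prems by (auto intro: incsubspace_sum[OF incsubspace_incalg])
  have "\<phi> (sum F (insert p P)) = \<phi> (F p + sum F P)"
    by (simp only: sum.insert[OF insert.hyps])
  also have "\<dots> = \<phi> (F p) + \<phi> (sum F P)"
    using insert.prems \<open>sum F P \<in> incalg\<close> by (simp add: lie_automorphism_add)
  also have "\<dots> = (\<Sum>p\<in>insert p P. \<phi> (F p))"
    using insert.IH insert.prems by (simp add: sum.insert[OF insert.hyps])
  finally show ?case .
qed (simp_all add: lie_automorphism_zero)

lemma lie_automorphism_expansion:
  assumes "f \<in> incalg"
  shows "\<phi> f = (\<Sum>(a, b)\<in>incsupp f. incsmult (f a b) (\<phi> (ebas a b)))"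
proof -
  have ebas: "ebas a b \<in> incalg" if "(a, b) \<in> incsupp f" for a b
    using incsupp_le[OF assms that] by (rule ebas_in_incalg)
  have "\<phi> f = \<phi> (\<Sum>(a, b)\<in>incsupp f. incsmult (f a b) (ebas a b))"
    by (subst incsupp_expansion) (rule refl)
  also have "\<dots> = (\<Sum>p\<in>incsupp f. \<phi> (case p of (a, b) \<Rightarrow> incsmult (f a b) (ebas a b)))"
    using ebas by (intro lie_automorphism_sum) (auto intro: incsubspace_smult[OF incsubspace_incalg])
  also have "\<dots> = (\<Sum>(a, b)\<in>incsupp f. incsmult (f a b) (\<phi> (ebas a b)))"
    by (intro sum.cong refl) (auto simp: lie_automorphism_smult[OF ebas])
  finally show ?thesis .
qed

lemma lie_automorphism_ebas_split:
  assumes "a \<le> t" "t \<le> b" "a \<noteq> b"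
  shows "\<phi> (ebas a b) = lie_bracket (\<phi> (ebas a t)) (\<phi> (ebas t b))"
proof -
  have "\<phi> (ebas a b) = \<phi> (lie_bracket (ebas a t) (ebas t b))"
    by (simp only: lie_bracket_ebas_ebas[OF assms])
  also have "\<dots> = lie_bracket (\<phi> (ebas a t)) (\<phi> (ebas t b))"
    using assms by (simp add: lie_automorphism_lie_bracket ebas_in_incalg)
  finally show ?thesis .
qed

lemma lie_automorphism_ebas_in_Jsp_1: "a < b \<Longrightarrow> \<phi> (ebas a b) \<in> Jsp 1"
  by (subst lie_automorphism_ebas_split[of a a b]) (auto simp del: One_nat_def intro: lie_bracket_in_Jsp_1)

lemma lie_automorphism_ebas_in_Jsp:
  "a \<le> b \<Longrightarrow> i \<le> ilen a b \<Longrightarrow> \<phi> (ebas a b) \<in> Jsp i"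
proof (induction i arbitrary: a b)
  case 0
  then show ?case by (simp add: Jsp_def lie_automorphism_incalg ebas_in_incalg)
next
  case (Suc i)
  then obtain t where t: "a < t" "t \<le> b" "i \<le> ilen t b"
    by (auto elim: ilen_Suc_split)
  then have "\<phi> (ebas a b) = lie_bracket (\<phi> (ebas a t)) (\<phi> (ebas t b))"
    by (intro lie_automorphism_ebas_split) auto
  also have "\<dots> \<in> Jsp (Suc i)"
    using t by (intro lie_bracket_in_Jsp_Suc lie_automorphism_ebas_in_Jsp_1 Suc.IH)
  finally show ?case .
qed

lemma lie_automorphism_Jsp:
  assumes f: "f \<in> Jsp i"
  shows "\<phi> f \<in> Jsp i"
proof -
  have "\<phi> f = (\<Sum>(a, b)\<in>incsupp f. incsmult (f a b) (\<phi> (ebas a b)))"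
    using f by (simp add: Jsp_def lie_automorphism_expansion)
  also have "\<dots> \<in> Jsp i"
  proof (intro incsubspace_sum[OF incsubspace_Jsp])
    fix p
    assume "p \<in> incsupp f"
    then obtain a b where p: "p = (a, b)" "f a b \<noteq> 0"
      by (auto simp: incsupp_def)
    with f have "a \<le> b" "i \<le> ilen a b"
      by (auto simp: Jsp_def incalg_def)
    then show "(case p of (a, b) \<Rightarrow> incsmult (f a b) (\<phi> (ebas a b))) \<in> Jsp i"
      unfolding p by (simp add: incsubspace_smult[OF incsubspace_Jsp] lie_automorphism_ebas_in_Jsp)
  qed
  finally show ?thesis .
qed

lemma lie_ideal_image: "lie_ideal S \<Longrightarrow> lie_ideal (\<phi> ` S)"
  unfolding lie_ideal_def incsubspace_def
proof (elim conjE, intro conjI ballI allI)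
  assume S: "S \<subseteq> incalg" "0 \<in> S" "\<forall>f\<in>S. \<forall>g\<in>S. f + g \<in> S"
    "\<forall>c. \<forall>f\<in>S. incsmult c f \<in> S" "\<forall>r\<in>incalg. \<forall>f\<in>S. lie_bracket r f \<in> S"
  show "\<phi> ` S \<subseteq> incalg" using S(1) lie_automorphism_incalg by auto
  show "0 \<in> \<phi> ` S" using S(2) lie_automorphism_zero by (metis image_eqI)
  fix f g :: "'x \<Rightarrow> 'x \<Rightarrow> 'k"
  assume f: "f \<in> \<phi> ` S"
  then obtain f' where f': "f' \<in> S" "f = \<phi> f'" by auto
  show "incsmult c f \<in> \<phi> ` S" for c
    using f' S(1,4) by (auto simp: lie_automorphism_smult[symmetric])
  {
    assume "g \<in> \<phi> ` S"
    then obtain g' where g': "g' \<in> S" "g = \<phi> g'" by auto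
    then have "f + g = \<phi> (f' + g')"
      using f' S(1) by (simp add: lie_automorphism_add subsetD)
    moreover have "f' + g' \<in> S"
      using f'(1) g'(1) S(3) by simp
    ultimately show "f + g \<in> \<phi> ` S"
      by (rule image_eqI)
  }
  {
    assume "g \<in> incalg"
    then obtain g' where "g' \<in> incalg" "g = \<phi> g'"
      using lie_automorphism_surj by auto
    then show "lie_bracket g f \<in> \<phi> ` S"
      using f' S(1,5) by (auto simp: lie_automorphism_lie_bracket[symmetric])
  }
qed

lemma lie_automorphism_ebas_vanishes_at_minimal_entry:
  assumes "x < y" "a \<le> x" "y \<le> b" "(a, b) \<noteq> (x, y)"
    and min: "minimal_entry (\<phi> ` ebas_ideal x y) c d"
  shows "\<phi> (ebas a b) c d = 0"
proof (cases "a = x")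
  case True
  with assms have "y < b" by auto
  then have "\<phi> (ebas a b) = - lie_bracket (\<phi> (ebas y b)) (\<phi> (ebas x y))"
    using True \<open>x < y\<close> lie_automorphism_ebas_split[of x y b] lie_bracket_swap by simp
  moreover have "\<phi> (ebas x y) \<in> \<phi> ` ebas_ideal x y"
    using \<open>x < y\<close> by (simp add: ebas_in_ebas_ideal)
  ultimately show ?thesis
    using lie_bracket_vanishes_at_minimal_entry[OF lie_automorphism_ebas_in_Jsp_1[OF \<open>y < b\<close>] _ min]
    by simp
next
  case False
  with assms have "a < x" "x \<le> b" by auto
  then have "\<phi> (ebas a b) = lie_bracket (\<phi> (ebas a x)) (\<phi> (ebas x b))"
    by (intro lie_automorphism_ebas_split) auto
  moreover have "\<phi> (ebas x b) \<in> \<phi> ` ebas_ideal x y"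
    using \<open>x \<le> b\<close> \<open>y \<le> b\<close> by (simp add: ebas_in_ebas_ideal)
  ultimately show ?thesis
    using lie_bracket_vanishes_at_minimal_entry[OF lie_automorphism_ebas_in_Jsp_1[OF \<open>a < x\<close>] _ min]
    by simp
qed

lemma lie_automorphism_apply_minimal_entry:
  assumes "x < y" and min: "minimal_entry (\<phi> ` ebas_ideal x y) c d" and f: "f \<in> ebas_ideal x y"
  shows "\<phi> f c d = f x y * \<phi> (ebas x y) c d"
proof -
  have "\<phi> f c d = (\<Sum>(a, b)\<in>incsupp f. f a b * \<phi> (ebas a b) c d)"
    using f by (simp add: ebas_ideal_def lie_automorphism_expansion sum_apply2 incsmult_def case_prod_beta)
  also have "\<dots> = (\<Sum>p\<in>incsupp f. if p = (x, y) then f x y * \<phi> (ebas x y) c d else 0)"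
  proof (intro sum.cong refl)
    fix p
    assume "p \<in> incsupp f"
    then obtain a b where p: "p = (a, b)" "f a b \<noteq> 0"
      by (auto simp: incsupp_def)
    with f have "a \<le> x" "y \<le> b"
      by (auto simp: ebas_ideal_def)
    then show "(case p of (a, b) \<Rightarrow> f a b * \<phi> (ebas a b) c d)
        = (if p = (x, y) then f x y * \<phi> (ebas x y) c d else 0)"
      using lie_automorphism_ebas_vanishes_at_minimal_entry[OF \<open>x < y\<close> _ _ _ min] p(1) by auto
  qed
  also have "\<dots> = f x y * \<phi> (ebas x y) c d"
    by (simp add: incsupp_def)
  finally show ?thesis .
qed

lemma lie_automorphism_minimal_entry_unique:
  assumes "x < y"
    and uv: "minimal_entry (\<phi> ` ebas_ideal x y) u v" "\<phi> (ebas x y) u v \<noteq> 0"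
    and cd: "minimal_entry (\<phi> ` ebas_ideal x y) c d" "ebas c d \<in> \<phi> ` ebas_ideal x y"
  shows "(c, d) = (u, v)"
proof -
  obtain f where f: "f \<in> ebas_ideal x y" "\<phi> f = ebas c d"
    using cd(2) by auto
  have "1 = f x y * \<phi> (ebas x y) c d"
    using lie_automorphism_apply_minimal_entry[OF \<open>x < y\<close> cd(1) f(1)] f(2) by (simp add: ebas_def)
  moreover have "ebas c d u v = f x y * \<phi> (ebas x y) u v"
    using lie_automorphism_apply_minimal_entry[OF \<open>x < y\<close> uv(1) f(1)] f(2) by simp
  ultimately have "ebas c d u v \<noteq> (0 :: 'k)"
    using uv(2) by auto
  then show ?thesis
    by (auto simp: ebas_def split: if_splits)
qed

lemma lie_automorphism_ebas_in_ebas_ideal: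
  assumes "x < y" "ilen u v = ilen x y" "\<phi> (ebas x y) u v \<noteq> 0"
  shows "\<phi> (ebas x y) \<in> ebas_ideal u v"
proof (rule ccontr)
  define A where "A = \<phi> ` ebas_ideal x y"
  have "lie_ideal A"
    unfolding A_def by (intro lie_ideal_image lie_ideal_ebas_ideal)
  have A_Jsp: "A \<subseteq> Jsp (ilen x y)"
    using ebas_ideal_subset_Jsp[OF less_imp_le[OF \<open>x < y\<close>]] lie_automorphism_Jsp
    by (auto simp: A_def)
  have "\<phi> (ebas x y) \<in> A"
    using \<open>x < y\<close> by (simp add: A_def ebas_in_ebas_ideal)
  assume "\<phi> (ebas x y) \<notin> ebas_ideal u v"
  then obtain a b where "\<phi> (ebas x y) a b \<noteq> 0" "\<not> (a \<le> u \<and> v \<le> b)"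
    using lie_automorphism_incalg[OF ebas_in_incalg] \<open>x < y\<close> by (auto simp: ebas_ideal_def)
  then obtain g c d where g: "g \<in> A" "g c d \<noteq> 0" and cd: "\<not> (c \<le> u \<and> v \<le> d)"
    and min_cd: "minimal_entry A c d"
    using minimal_entry_outside_cone[of A] \<open>lie_ideal A\<close> \<open>\<phi> (ebas x y) \<in> A\<close>
    by (metis lie_ideal_def)
  have "c \<noteq> d"
    using g A_Jsp Jsp_diagonal[of "ilen x y"] ilen_pos[OF \<open>x < y\<close>] by auto
  then have "ebas c d \<in> A"
    using lie_ideal_contains_ebas[OF \<open>lie_ideal A\<close> g] by simp
  moreover have "minimal_entry A u v"
    using A_Jsp assms(2) by (simp add: minimal_entry_if_subset_Jsp)
  ultimately have "(c, d) = (u, v)"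
    using lie_automorphism_minimal_entry_unique[OF \<open>x < y\<close>] min_cd assms(3) by (simp add: A_def)
  with cd show False
    by simp
qed

end

theorem lemma4p4:
  fixes \<phi> :: "('x::{finite,order} \<Rightarrow> 'x \<Rightarrow> 'k::field) \<Rightarrow> ('x \<Rightarrow> 'x \<Rightarrow> 'k)"
    and x y u v :: 'x and i :: nat and k :: 'k
  assumes "connected_poset TYPE('x)"
    and "lie_automorphism \<phi>"
    and "x \<le> y" and "ilen x y = i" and "i > 0"
    and "u < v" and "k \<noteq> 0"
    and "Lcomp i (\<phi> (ebas x y)) = incsmult k (ebas u v)"
  shows "\<phi> (ebas x y) - Lcomp i (\<phi> (ebas x y)) \<in> ideal_gen (ebas u v) \<inter> Jsp (i + 1)"
proof -
  have "x < y"
    using assms(3-5) by (auto simp: order.order_iff_strict)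
  have "Lcomp i (\<phi> (ebas x y)) u v = k"
    using assms(8) by (simp add: incsmult_def ebas_def)
  then have "ilen u v = ilen x y" "\<phi> (ebas x y) u v \<noteq> 0"
    using assms(4,7) by (auto simp: Lcomp_def split: if_splits)
  then have "\<phi> (ebas x y) \<in> ebas_ideal u v"
    by (rule lie_automorphism_ebas_in_ebas_ideal[OF assms(2) \<open>x < y\<close>])
  then have "\<phi> (ebas x y) - Lcomp i (\<phi> (ebas x y)) \<in> ideal_gen (ebas u v)"
    using ebas_ideal_subset_ideal_gen[OF less_imp_le[OF assms(6)]] diff_Lcomp_in_ebas_ideal by blast
  moreover have "\<phi> (ebas x y) \<in> Jsp i"
    using assms(2-4) by (simp add: lie_automorphism_Jsp ebas_in_Jsp)
  ultimately show ?thesis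
    using diff_Lcomp_in_Jsp_Suc by auto
qed

end
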